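(* Let $A\in\mathbb{R}^{n\times n}$ and $b\in\mathbb{R}^n$, and suppose that $\mathcal{N}(A^\top-I)=\mathrm{span}(v)$ for some vector $v>0$, and $A-I+D$ is an $M$-matrix for every diagonal matrix $D=\mathrm{diag}(d)$ with $d\ge 0$ and $d\neq 0$. Then: (1) if $v^\top b=0$ and $A$ is symmetric, then the absolute value equation $Ax-|x|-b=0$ has a solution, but the solution is not unique; (2) if $v^\top b>0$, then the absolute value equation $Ax-|x|-b=0$ has no solution.
   Context: For $x\in\mathbb{R}^n$, $|x|=(|x_1|,\dots,|x_n|)^\top$. A matrix is a $Z$-matrix if all its off-diagonal entries are $\le 0$; a $Z$-matrix $A$ is an $M$-matrix if $A$ is nonsingular and $A^{-1}\ge 0$ (entrywise). Vector inequalities are entrywise; $v>0$ means all entries of $v$ are strictly positive. $\mathcal{N}(X)$ denotes the null space of $X$. *)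

theory Defs
  imports "HOL-Analysis.Analysis"
begin

definition vabs :: "real^'n \<Rightarrow> real^'n" where
  "vabs x = (\<chi> i. \<bar>x $ i\<bar>)"

definition diag_mat :: "real^'n \<Rightarrow> real^'n^'n" where
  "diag_mat d = (\<chi> i j. if i = j then d $ i else 0)"

definition null_space :: "real^'n^'n \<Rightarrow> (real^'n) set" where
  "null_space X = {x. X *v x = 0}"

definition Z_matrix :: "real^'n^'n \<Rightarrow> bool" where
  "Z_matrix A \<longleftrightarrow> (\<forall>i j. i \<noteq> j \<longrightarrow> A $ i $ j \<le> 0)"

definition M_matrix :: "real^'n^'n \<Rightarrow> bool" where
  "M_matrix A \<longleftrightarrow> Z_matrix A \<and> invertible A \<and> (\<forall>i j. matrix_inv A $ i $ j \<ge> 0)"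

end

theory Submission
  imports Defs
begin

text \<open>
  Writing the equation as \<open>(A - I) x = b + ( |x| - x)\<close> and pairing with the positive left
  eigenvector \<open>v\<close> of \<open>A\<close> gives \<open>v\<^sup>T b = - v\<^sup>T ( |x| - x) \<le> 0\<close>, which rules out \<open>v\<^sup>T b > 0\<close>.
  If \<open>A\<close> is symmetric, the range of \<open>A - I\<close> is the orthogonal complement of its kernel
  \<open>span {v}\<close>, so \<open>v\<^sup>T b = 0\<close> yields some \<open>x\<^sub>0\<close> with \<open>(A - I) x\<^sub>0 = b\<close>; since \<open>v > 0\<close>, every
  \<open>x\<^sub>0 + s v\<close> with \<open>s\<close> large is nonnegative and hence solves the absolute value equation.
\<close>

lemma transpose_minus_mat_1: "transpose (A - mat 1) = transpose A - (mat 1 :: real^'n^'n)"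
  by (simp add: transpose_def mat_def vec_eq_iff)

lemma minus_mat_1_mult: "(A - mat 1) *v x = A *v x - (x :: real^'n)"
  by (simp add: matrix_vector_mult_diff_rdistrib)

lemma vabs_eq_self: "(\<forall>i. x $ i \<ge> 0) \<Longrightarrow> vabs x = x"
  by (simp add: vabs_def vec_eq_iff)

lemma inner_diff_vabs_nonpos:
  assumes "\<forall>i. v $ i \<ge> 0"
  shows "v \<bullet> (x - vabs x) \<le> 0"
proof -
  have "v \<bullet> (x - vabs x) = (\<Sum>i\<in>UNIV. v $ i * (x $ i - \<bar>x $ i\<bar>))"
    by (simp add: inner_vec_def vabs_def)
  also have "\<dots> \<le> 0"
    using assms by (intro sum_nonpos) (simp add: mult_nonneg_nonpos)
  finally show ?thesis .
qed

lemma inner_mult_fixed_left_vector: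
  fixes A :: "real^'n^'n"
  assumes "transpose A *v v = v"
  shows "v \<bullet> (A *v x) = v \<bullet> x"
proof -
  have "v \<bullet> (A *v x) = (v v* A) \<bullet> x"
    by (rule dot_lmul_matrix[symmetric])
  also have "v v* A = v"
    using assms by simp
  finally show ?thesis .
qed

lemma abs_value_eq_unsolvable:
  fixes A :: "real^'n^'n"
  assumes "transpose A *v v = v" and "\<forall>i. v $ i \<ge> 0" and "v \<bullet> b > 0"
  shows "A *v x - vabs x - b \<noteq> 0"
proof
  assume "A *v x - vabs x - b = 0"
  then have "b = A *v x - vabs x"
    by simp
  then have "v \<bullet> b = v \<bullet> (A *v x) - v \<bullet> vabs x"
    by (simp add: inner_diff_right)
  also have "\<dots> = v \<bullet> (x - vabs x)"
    using assms(1) by (simp add: inner_mult_fixed_left_vector inner_diff_right)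
  finally show False
    using inner_diff_vabs_nonpos[OF assms(2), of x] assms(3) by simp
qed

lemma range_symmetric_matrix:
  fixes B :: "real^'n^'n"
  assumes "transpose B = B"
  shows "range ((*v) B) = (null_space B)\<^sup>\<bottom>"
proof -
  have lin: "linear ((*v) B)"
    by (rule matrix_vector_mul_linear)
  have "null_space B = (*v) B -` {0}"
    by (auto simp: null_space_def)
  also have "\<dots> = (range (adjoint ((*v) B)))\<^sup>\<bottom>"
    using lin by (rule ker_orthogonal_comp_adjoint)
  also have "adjoint ((*v) B) = (*v) B"
    using adjoint_matrix[of B] assms by simp
  finally have ker: "null_space B = (range ((*v) B))\<^sup>\<bottom>" .
  have "subspace (range ((*v) B))"
    using lin subspace_UNIV by (rule linear_subspace_image)
  then show ?thesis
    unfolding ker by (rule orthogonal_comp_self[symmetric])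
qed

lemma nonneg_add_scaleR_positive:
  fixes x v :: "real^'n"
  assumes "\<forall>i. v $ i > 0" and "s \<ge> (\<Sum>j\<in>UNIV. \<bar>x $ j\<bar> / v $ j)"
  shows "(x + s *\<^sub>R v) $ i \<ge> 0"
proof -
  have "\<bar>x $ i\<bar> / v $ i \<le> (\<Sum>j\<in>UNIV. \<bar>x $ j\<bar> / v $ j)"
    using assms(1) by (intro member_le_sum) (auto intro: divide_nonneg_pos)
  then have "\<bar>x $ i\<bar> \<le> (\<Sum>j\<in>UNIV. \<bar>x $ j\<bar> / v $ j) * v $ i"
    using assms(1) by (simp add: divide_le_eq)
  also have "\<dots> \<le> s * v $ i"
    using assms by (simp add: mult_right_mono less_imp_le)
  finally show ?thesis
    by simp
qed

lemma abs_value_eq_nonneg_solution: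
  fixes A :: "real^'n^'n"
  assumes "\<forall>i. y $ i \<ge> 0" and "(A - mat 1) *v y = b"
  shows "A *v y - vabs y - b = 0"
  using assms by (simp add: vabs_eq_self minus_mat_1_mult)

lemma abs_value_eq_solutions_along_kernel:
  fixes A :: "real^'n^'n"
  assumes "(A - mat 1) *v x\<^sub>0 = b" and "(A - mat 1) *v v = 0" and "\<forall>i. v $ i > 0"
    and "s \<ge> (\<Sum>j\<in>UNIV. \<bar>x\<^sub>0 $ j\<bar> / v $ j)"
  shows "A *v (x\<^sub>0 + s *\<^sub>R v) - vabs (x\<^sub>0 + s *\<^sub>R v) - b = 0"
proof (rule abs_value_eq_nonneg_solution)
  show "\<forall>i. (x\<^sub>0 + s *\<^sub>R v) $ i \<ge> 0"
    using nonneg_add_scaleR_positive[OF assms(3,4)] by blast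
  show "(A - mat 1) *v (x\<^sub>0 + s *\<^sub>R v) = b"
    using assms(1,2) by (simp add: matrix_vector_right_distrib matrix_vector_mult_scaleR)
qed

lemma symmetric_matrix_solvable:
  fixes B :: "real^'n^'n"
  assumes "transpose B = B" and "null_space B = span {v}" and "v \<bullet> b = 0"
  obtains x where "B *v x = b"
proof -
  have "b \<in> (span {v})\<^sup>\<bottom>"
    using assms(3) by (auto simp: orthogonal_comp_def orthogonal_def span_singleton inner_commute)
  also have "(span {v})\<^sup>\<bottom> = range ((*v) B)"
    using range_symmetric_matrix[OF assms(1)] assms(2) by simp
  finally show ?thesis
    using that by blast
qed

lemma abs_value_eq_not_unique:
  fixes A :: "real^'n^'n"
  assumes "transpose A = A" and null: "null_space (A - mat 1) = span {v}"
    and vpos: "\<forall>i. v $ i > 0" and "v \<bullet> b = 0"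
  shows "\<exists>x y. x \<noteq> y \<and> A *v x - vabs x - b = 0 \<and> A *v y - vabs y - b = 0"
proof -
  have "transpose (A - mat 1) = A - mat 1"
    using assms(1) by (simp add: transpose_minus_mat_1)
  then obtain x\<^sub>0 where x\<^sub>0: "(A - mat 1) *v x\<^sub>0 = b"
    using symmetric_matrix_solvable null assms(4) by blast
  have "v \<in> null_space (A - mat 1)"
    using null by (simp add: span_base)
  then have kernel: "(A - mat 1) *v v = 0"
    by (simp add: null_space_def)
  define t where "t = (\<Sum>j\<in>UNIV. \<bar>x\<^sub>0 $ j\<bar> / v $ j)"
  have sol: "A *v (x\<^sub>0 + s *\<^sub>R v) - vabs (x\<^sub>0 + s *\<^sub>R v) - b = 0" if "s \<ge> t" for s
    using abs_value_eq_solutions_along_kernel[OF x\<^sub>0 kernel vpos] that unfolding t_def .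
  have "v \<noteq> 0"
    using vpos by auto
  then have "x\<^sub>0 + t *\<^sub>R v \<noteq> x\<^sub>0 + (t + 1) *\<^sub>R v"
    by (simp add: scaleR_left_distrib)
  moreover have "A *v (x\<^sub>0 + t *\<^sub>R v) - vabs (x\<^sub>0 + t *\<^sub>R v) - b = 0"
    by (rule sol) simp
  moreover have "A *v (x\<^sub>0 + (t + 1) *\<^sub>R v) - vabs (x\<^sub>0 + (t + 1) *\<^sub>R v) - b = 0"
    by (rule sol) simp
  ultimately show ?thesis
    by (intro exI conjI)
qed

theorem corollary3p1:
  fixes A :: "real^'n^'n" and b v :: "real^'n"
  assumes null: "null_space (transpose A - mat 1) = span {v}"
    and vpos: "\<forall>i. v $ i > 0"
    and M: "\<And>d. (\<forall>i. d $ i \<ge> 0) \<Longrightarrow> d \<noteq> 0 \<Longrightarrow> M_matrix (A - mat 1 + diag_mat d)"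
  shows "(v \<bullet> b = 0 \<and> transpose A = A \<longrightarrow>
           (\<exists>x. A *v x - vabs x - b = 0) \<and>
           (\<exists>x y. x \<noteq> y \<and> A *v x - vabs x - b = 0 \<and> A *v y - vabs y - b = 0))
       \<and> (v \<bullet> b > 0 \<longrightarrow> \<not> (\<exists>x. A *v x - vabs x - b = 0))"
proof (intro conjI impI)
  have "v \<in> null_space (transpose A - mat 1)"
    using null by (simp add: span_base)
  then have left_eigen: "transpose A *v v = v"
    by (simp add: null_space_def minus_mat_1_mult)
  show "\<not> (\<exists>x. A *v x - vabs x - b = 0)" if "v \<bullet> b > 0"
    using abs_value_eq_unsolvable[OF left_eigen _ that] vpos by (simp add: less_imp_le)
  assume "v \<bullet> b = 0 \<and> transpose A = A"
  then have vb: "v \<bullet> b = 0" and symA: "transpose A = A"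
    by simp_all
  have "null_space (A - mat 1) = span {v}"
    using null by (simp only: symA)
  then obtain x y where "x \<noteq> y" and x: "A *v x - vabs x - b = 0"
    and "A *v y - vabs y - b = 0"
    using abs_value_eq_not_unique[OF symA _ vpos vb] by blast
  then show "\<exists>x y. x \<noteq> y \<and> A *v x - vabs x - b = 0 \<and> A *v y - vabs y - b = 0"
    by (intro exI conjI)
  show "\<exists>x. A *v x - vabs x - b = 0"
    using x by (rule exI)
qed

end
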